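(* Let $i\ge1$, $n=4i$, and let $C$ be a ceiling coalition of the $i$-bit roof game $G_{i\text{-bit}}$ on players $\{1,\dots,n\}$ such that $C$ has at least two distinct direct left-shifts. Let $p\in C$ be a player with $p\ge2$ and $p-1\notin C$ (so that $(C\setminus\{p\})\cup\{p-1\}$ is a direct left-shift of $C$), and let $a$ be such that $p$ is the $a$-th smallest element of $C$. Then $p=2a$.
   Context: Players are $N=\{1,\dots,n\}$ with $n=4i$. A coalition $S'$ is a direct left-shift of $S$ if there is $m\in S$, $2\le m\le n$, $m-1\notin S$, with $S'=(S\setminus\{m\})\cup\{m-1\}$; a left-shift of $S$ is obtained by one or more successive direct left-shifts. For $k\in\{0,1,\dots,2^i-1\}$ with $i$-bit binary representation $b_1b_2\cdots b_i$ ($b_1$ most significant), the $(k,i)$-encoding coalition is $S_{k,i}=\bigcup_{j=1}^{i}B_j$ where $B_j=\{4(j-1)+2,4(j-1)+3\}$ if $b_j=0$ and $B_j=\{4(j-1)+1,4(j-1)+4\}$ if $b_j=1$ (e.g. $S_{2,2}=\{1,4,6,7\}$). The $i$-bit roof game $G_{i\text{-bit}}$ is the simple game on $N$ in which a coalition is winning iff it contains some $S_{k,i}$ or some left-shift of some $S_{k,i}$; it is a canonical linear game whose roof coalitions (minimal winning coalitions all of whose left-shifts... equivalently all of whose right-shifts are losing) are exactly the $S_{k,i}$. A maximal losing coalition is a losing coalition $S$ such that $S\cup\{m\}$ is winning for all $m\notin S$; a ceiling coalition is a maximal losing coalition all of whose left-shifts are winning. *)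

theory Defs
  imports Main
begin

definition direct_left_shift :: "nat \<Rightarrow> nat set \<Rightarrow> nat set \<Rightarrow> bool" where
  "direct_left_shift n S S' \<longleftrightarrow>
     (\<exists>m\<in>S. 2 \<le> m \<and> m \<le> n \<and> m - 1 \<notin> S \<and> S' = insert (m - 1) (S - {m}))"

definition left_shift :: "nat \<Rightarrow> nat set \<Rightarrow> nat set \<Rightarrow> bool" where
  "left_shift n = (direct_left_shift n)\<^sup>+\<^sup>+"

(* bit j (j = 1..i, j = 1 most significant) of the i-bit representation of k *)
definition bit_of :: "nat \<Rightarrow> nat \<Rightarrow> nat \<Rightarrow> nat" where
  "bit_of i k j = (k div 2 ^ (i - j)) mod 2"

definition enc_block :: "nat \<Rightarrow> nat \<Rightarrow> nat \<Rightarrow> nat set" where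
  "enc_block i k j = (if bit_of i k j = 0
       then {4 * (j - 1) + 2, 4 * (j - 1) + 3}
       else {4 * (j - 1) + 1, 4 * (j - 1) + 4})"

definition enc_coalition :: "nat \<Rightarrow> nat \<Rightarrow> nat set" where
  "enc_coalition i k = (\<Union>j\<in>{1..i}. enc_block i k j)"

definition roof_winning :: "nat \<Rightarrow> nat set \<Rightarrow> bool" where
  "roof_winning i S \<longleftrightarrow> S \<subseteq> {1..4 * i} \<and>
     (\<exists>k < 2 ^ i. \<exists>T. (T = enc_coalition i k \<or> left_shift (4 * i) (enc_coalition i k) T) \<and> T \<subseteq> S)"

definition max_losing :: "nat \<Rightarrow> nat set \<Rightarrow> bool" where
  "max_losing i S \<longleftrightarrow> S \<subseteq> {1..4 * i} \<and> \<not> roof_winning i S \<and>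
     (\<forall>m \<in> {1..4 * i} - S. roof_winning i (insert m S))"

definition ceiling :: "nat \<Rightarrow> nat set \<Rightarrow> bool" where
  "ceiling i S \<longleftrightarrow> max_losing i S \<and>
     (\<forall>S'. left_shift (4 * i) S S' \<longrightarrow> roof_winning i S')"

end

theory Submission
  imports Defs
begin

text \<open>
  Write c_S(y) = prefix_card S y for the number of elements of S that are at most y. A coalition A can be
  left-shifted into a subset of S exactly when c_A \<le> c_S pointwise, so S wins iff c_S dominates
  c of some encoding coalition; and every encoding coalition E has
  c_E(y) = \<lfloor>y/2\<rfloor> + [y odd and y \<in> E]. The direct left-shift of C at p raises c_C by one exactly
  at p - 1. As C loses but its shift at p wins, some E_k exceeds c_C only at p - 1, by exactly one;
  as the shift at another player q \<noteq> p also wins, some E_l has c_{E_l}(p - 1) \<le> c_C(p - 1).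
  By the formula for c_E this forces p - 1 odd and c_C(p - 1) = (p - 1)/2, so a = c_C(p) = p/2.
\<close>

definition prefix_card :: "nat set \<Rightarrow> nat \<Rightarrow> nat" where
  "prefix_card S y = card {s \<in> S. s \<le> y}"

lemma prefix_card_pred:
  assumes "finite S" "y \<ge> 1"
  shows "prefix_card S y = prefix_card S (y - 1) + (if y \<in> S then 1 else 0)"
proof -
  have "{s \<in> S. s \<le> y} = {s \<in> S. s \<le> y - 1} \<union> (S \<inter> {y})"
    using assms(2) by auto
  moreover have "{s \<in> S. s \<le> y - 1} \<inter> (S \<inter> {y}) = {}"
    using assms(2) by auto
  ultimately show ?thesis
    using assms(1) by (simp add: prefix_card_def card_Un_disjoint Int_insert_right)
qed

lemma prefix_card_doubleton:
  assumes "u \<noteq> v"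
  shows "prefix_card {u, v} y = (if u \<le> y then 1 else 0) + (if v \<le> y then 1 else 0)"
proof -
  have "{s \<in> {u, v}. s \<le> y} = (if u \<le> y then {u} else {}) \<union> (if v \<le> y then {v} else {})"
    by auto
  then show ?thesis using assms by (simp add: prefix_card_def)
qed

lemma prefix_card_shift:
  assumes "finite S" "m \<in> S" "m \<ge> 1" "m - 1 \<notin> S"
  shows "prefix_card (insert (m - 1) (S - {m})) y = prefix_card S y + (if y = m - 1 then 1 else 0)"
proof -
  let ?P = "{s \<in> S. s \<le> y}"
  have fin: "finite ?P" using assms(1) by simp
  consider "y < m - 1" | "y = m - 1" | "y \<ge> m" by linarith
  then show ?thesis
  proof cases
    case 1
    then have "{s \<in> insert (m - 1) (S - {m}). s \<le> y} = ?P" by auto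
    then show ?thesis using 1 by (simp add: prefix_card_def)
  next
    case 2
    then have "{s \<in> insert (m - 1) (S - {m}). s \<le> y} = insert (m - 1) ?P"
      using assms(2,3) by auto
    then show ?thesis using 2 assms(4) fin by (simp add: prefix_card_def)
  next
    case 3
    then have "{s \<in> insert (m - 1) (S - {m}). s \<le> y} = insert (m - 1) (?P - {m})"
      using assms(2,3) by auto
    moreover have "card (insert (m - 1) (?P - {m})) = card ?P"
    proof -
      have "m \<in> ?P" using assms(2) 3 by simp
      then have "Suc (card (?P - {m})) = card ?P" using fin by (rule card_Suc_Diff1[rotated])
      then show ?thesis using assms(4) fin by simp
    qed
    ultimately show ?thesis
      using 3 assms(3) by (simp add: prefix_card_def)
  qed
qed

lemma direct_left_shift_prefix_card_mono:
  assumes "direct_left_shift n S S'" "finite S"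
  shows "finite S'" "prefix_card S y \<le> prefix_card S' y"
proof -
  obtain m where m: "m \<in> S" "2 \<le> m" "m - 1 \<notin> S" "S' = insert (m - 1) (S - {m})"
    using assms(1) unfolding direct_left_shift_def by blast
  then show "finite S'" using assms(2) by simp
  show "prefix_card S y \<le> prefix_card S' y"
    using prefix_card_shift[OF assms(2) m(1) _ m(3)] m(2,4) by simp
qed

lemma left_shift_prefix_card_mono:
  assumes "left_shift n S S'" "finite S"
  shows "prefix_card S y \<le> prefix_card S' y"
proof -
  have "finite S' \<and> (\<forall>y. prefix_card S y \<le> prefix_card S' y)"
    using assms(1) unfolding left_shift_def
  proof (induction rule: tranclp_induct)
    case (base S')
    then show ?case using direct_left_shift_prefix_card_mono assms(2) by blast
  next
    case (step S' S'')
    then show ?case using direct_left_shift_prefix_card_mono order_trans by meson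
  qed
  then show ?thesis by blast
qed

lemma prefix_card_zero: "0 \<notin> S \<Longrightarrow> prefix_card S 0 = 0"
  by (auto simp: prefix_card_def)

text \<open>The shifted player m is the least element of A below which S has more elements than A.\<close>

lemma dominated_direct_left_shift:
  assumes "finite A" "A \<subseteq> {1..n}" "finite S" "0 \<notin> S"
    and dom: "\<And>y. prefix_card A y \<le> prefix_card S y" and "\<not> A \<subseteq> S"
  obtains m where "m \<in> A" "2 \<le> m" "m \<le> n" "m - 1 \<notin> A"
    "\<And>y. prefix_card (insert (m - 1) (A - {m})) y \<le> prefix_card S y"
proof -
  define spare where "spare a \<longleftrightarrow> a \<in> A \<and> prefix_card A (a - 1) < prefix_card S (a - 1)" for a
  obtain z where z: "z \<in> A" "z \<notin> S" using assms(6) by blast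
  have "z \<ge> 1" using z(1) assms(2) by auto
  then have "spare z"
    using z dom[of z] prefix_card_pred[OF assms(1), of z] prefix_card_pred[OF assms(3), of z]
    unfolding spare_def by simp
  define m where "m = (LEAST a. spare a)"
  have "spare m" unfolding m_def by (rule LeastI) fact
  then have mA: "m \<in> A" and gap: "prefix_card A (m - 1) < prefix_card S (m - 1)"
    unfolding spare_def by auto
  have m2: "2 \<le> m"
  proof (rule ccontr)
    assume "\<not> 2 \<le> m"
    then have "m - 1 = 0" by simp
    then show False using gap prefix_card_zero[OF assms(4)] by simp
  qed
  have m1: "m - 1 \<notin> A"
  proof
    assume "m - 1 \<in> A"
    then have "spare (m - 1)"
      using gap m2 prefix_card_pred[OF assms(1), of "m - 1"] prefix_card_pred[OF assms(3), of "m - 1"]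
      unfolding spare_def by (auto split: if_splits)
    then have "m \<le> m - 1" unfolding m_def by (rule Least_le)
    then show False using m2 by simp
  qed
  show thesis
  proof
    show "prefix_card (insert (m - 1) (A - {m})) y \<le> prefix_card S y" for y
      using prefix_card_shift[OF assms(1) mA _ m1] m2 gap dom[of y] by auto
  qed (use mA m2 m1 assms(2) in auto)
qed

lemma prefix_card_le_imp_left_shift:
  assumes "finite A" "A \<subseteq> {1..n}" "finite S" "0 \<notin> S"
    and "\<And>y. prefix_card A y \<le> prefix_card S y"
  shows "\<exists>T \<subseteq> S. T = A \<or> left_shift n A T"
  using assms
proof (induction "\<Sum>A" arbitrary: A rule: less_induct)
  case less
  show ?case
  proof (cases "A \<subseteq> S")
    case False
    obtain m where m: "m \<in> A" "2 \<le> m" "m \<le> n" "m - 1 \<notin> A"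
      and dom: "\<And>y. prefix_card (insert (m - 1) (A - {m})) y \<le> prefix_card S y"
      using dominated_direct_left_shift[OF less.prems False] by blast
    define A' where "A' = insert (m - 1) (A - {m})"
    have step: "direct_left_shift n A A'"
      unfolding direct_left_shift_def A'_def using m by blast
    have "\<Sum>A' = (m - 1) + (\<Sum>A - m)"
      using less.prems(1) m(1,4) by (simp add: A'_def sum_diff1_nat)
    moreover have "m \<le> \<Sum>A" using less.prems(1) m(1) member_le_sum[of m A id] by simp
    ultimately have smaller: "\<Sum>A' < \<Sum>A" using m(2) by linarith
    have "finite A'" "A' \<subseteq> {1..n}"
      using less.prems(1,2) m(2,3) by (auto simp: A'_def)
    moreover have "prefix_card A' y \<le> prefix_card S y" for y
      using dom by (simp add: A'_def)
    ultimately obtain T where T: "T \<subseteq> S" "T = A' \<or> left_shift n A' T"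
      using less.hyps[OF smaller _ _ less.prems(3,4)] by blast
    have "left_shift n A T"
      using T(2) step unfolding left_shift_def by (metis tranclp.r_into_trancl tranclp_into_tranclp2)
    moreover note T(1)
    ultimately show ?thesis by blast
  qed blast
qed

definition pair_block :: "bool \<Rightarrow> nat \<Rightarrow> nat set" where
  "pair_block inner j =
     (if inner then {4 * (j - 1) + 2, 4 * (j - 1) + 3} else {4 * (j - 1) + 1, 4 * (j - 1) + 4})"

text \<open>Choosing the block of every position freely (inner pair or outer pair) generalises
  enc_coalition to a family that can be built up by induction on the number of positions.\<close>

definition block_coalition :: "(nat \<Rightarrow> bool) \<Rightarrow> nat \<Rightarrow> nat set" where
  "block_coalition inner i = (\<Union>j\<in>{1..i}. pair_block (inner j) j)"

lemma enc_coalition_eq_block_coalition: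
  "enc_coalition i k = block_coalition (\<lambda>j. bit_of i k j = 0) i"
  unfolding enc_coalition_def block_coalition_def enc_block_def pair_block_def by simp

lemma block_coalition_subset: "block_coalition inner i \<subseteq> {1..4 * i}"
  unfolding block_coalition_def pair_block_def by (auto split: if_splits)

lemma block_coalition_Suc:
  "block_coalition inner (Suc i) = block_coalition inner i \<union> pair_block (inner (Suc i)) (Suc i)"
  unfolding block_coalition_def by (auto simp: atLeastAtMostSuc_conv)

lemma pair_block_Suc:
  "pair_block inner (Suc i) = (if inner then {4 * i + 2, 4 * i + 3} else {4 * i + 1, 4 * i + 4})"
  by (simp add: pair_block_def)

lemma pair_block_prefix_card:
  assumes "4 * i < y" "y \<le> 4 * i + 4"
  shows "2 * i + prefix_card (pair_block inner (Suc i)) y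
           = y div 2 + (if odd y \<and> y \<in> pair_block inner (Suc i) then 1 else 0)"
proof -
  have "y = 4 * i + 1 \<or> y = 4 * i + 2 \<or> y = 4 * i + 3 \<or> y = 4 * i + 4"
    using assms by linarith
  then show ?thesis
    unfolding pair_block_Suc by (cases inner; elim disjE; simp add: prefix_card_doubleton)
qed

lemma block_coalition_prefix_card:
  "y \<le> 4 * i \<Longrightarrow> prefix_card (block_coalition inner i) y
     = y div 2 + (if odd y \<and> y \<in> block_coalition inner i then 1 else 0)"
proof (induction i arbitrary: y)
  case 0
  then show ?case by (simp add: block_coalition_def prefix_card_def)
next
  case (Suc i)
  let ?B = "block_coalition inner i" and ?P = "pair_block (inner (Suc i)) (Suc i)"
  have B: "?B \<subseteq> {1..4 * i}" by (rule block_coalition_subset)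
  have P: "?P \<subseteq> {4 * i + 1..4 * i + 4}" by (auto simp: pair_block_Suc split: if_splits)
  show ?case
  proof (cases "y \<le> 4 * i")
    case True
    then have "{s \<in> block_coalition inner (Suc i). s \<le> y} = {s \<in> ?B. s \<le> y}"
      and "y \<in> block_coalition inner (Suc i) \<longleftrightarrow> y \<in> ?B"
      using P by (auto simp: block_coalition_Suc)
    then show ?thesis using Suc.IH[OF True] by (simp add: prefix_card_def)
  next
    case False
    have "{s \<in> ?B. s \<le> 4 * i} = ?B" using B by auto
    then have card_B: "card ?B = 2 * i" using Suc.IH[of "4 * i"] by (simp add: prefix_card_def)
    have "{s \<in> block_coalition inner (Suc i). s \<le> y} = ?B \<union> {s \<in> ?P. s \<le> y}"
      using False B by (auto simp: block_coalition_Suc)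
    moreover have "?B \<inter> {s \<in> ?P. s \<le> y} = {}" using B P by fastforce
    moreover have "finite ?B" using B finite_subset by blast
    ultimately have "prefix_card (block_coalition inner (Suc i)) y = 2 * i + prefix_card ?P y"
      using card_B by (simp add: prefix_card_def card_Un_disjoint)
    moreover have "y \<in> block_coalition inner (Suc i) \<longleftrightarrow> y \<in> ?P"
      using False B by (auto simp: block_coalition_Suc)
    ultimately show ?thesis
      using pair_block_prefix_card[of i y] False Suc.prems by simp
  qed
qed

lemma enc_coalition_subset: "enc_coalition i k \<subseteq> {1..4 * i}"
  unfolding enc_coalition_eq_block_coalition by (rule block_coalition_subset)

lemma finite_enc_coalition: "finite (enc_coalition i k)"
  using enc_coalition_subset finite_subset by blast

lemma enc_coalition_prefix_card:
  "y \<le> 4 * i \<Longrightarrow> prefix_card (enc_coalition i k) y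
     = y div 2 + (if odd y \<and> y \<in> enc_coalition i k then 1 else 0)"
  unfolding enc_coalition_eq_block_coalition by (rule block_coalition_prefix_card)

lemma roof_winning_iff_prefix_card:
  "roof_winning i S \<longleftrightarrow> S \<subseteq> {1..4 * i} \<and>
     (\<exists>k < 2 ^ i. \<forall>y. prefix_card (enc_coalition i k) y \<le> prefix_card S y)"
proof
  assume win: "roof_winning i S"
  then obtain k T where k: "k < 2 ^ i" "T \<subseteq> S"
    and T: "T = enc_coalition i k \<or> left_shift (4 * i) (enc_coalition i k) T"
    unfolding roof_winning_def by blast
  have S: "S \<subseteq> {1..4 * i}" using win unfolding roof_winning_def by blast
  have "prefix_card (enc_coalition i k) y \<le> prefix_card S y" for y
  proof -
    have "prefix_card (enc_coalition i k) y \<le> prefix_card T y"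
      using T left_shift_prefix_card_mono[OF _ finite_enc_coalition] by auto
    also have "\<dots> \<le> prefix_card S y"
      unfolding prefix_card_def using k(2) finite_subset[OF S] by (intro card_mono) auto
    finally show ?thesis .
  qed
  then show "S \<subseteq> {1..4 * i} \<and> (\<exists>k < 2 ^ i. \<forall>y. prefix_card (enc_coalition i k) y \<le> prefix_card S y)"
    using S k(1) by blast
next
  assume "S \<subseteq> {1..4 * i} \<and> (\<exists>k < 2 ^ i. \<forall>y. prefix_card (enc_coalition i k) y \<le> prefix_card S y)"
  then obtain k where S: "S \<subseteq> {1..4 * i}" and k: "k < 2 ^ i"
    and dom: "\<And>y. prefix_card (enc_coalition i k) y \<le> prefix_card S y" by blast
  have "finite S" "0 \<notin> S" using S finite_subset by auto
  then obtain T where "T \<subseteq> S" "T = enc_coalition i k \<or> left_shift (4 * i) (enc_coalition i k) T"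
    using prefix_card_le_imp_left_shift[OF finite_enc_coalition enc_coalition_subset _ _ dom] by blast
  then show "roof_winning i S" unfolding roof_winning_def using S k by blast
qed

lemma roof_winning_direct_shiftE:
  assumes "roof_winning i (insert (m - 1) (C - {m}))" "finite C" "m \<in> C" "2 \<le> m" "m - 1 \<notin> C"
  obtains k where "k < 2 ^ i"
    "\<And>y. prefix_card (enc_coalition i k) y \<le> prefix_card C y + (if y = m - 1 then 1 else 0)"
  using assms(1) prefix_card_shift[OF assms(2,3) _ assms(5)] assms(4)
  unfolding roof_winning_iff_prefix_card by auto

lemma losing_direct_shift_excess:
  assumes "\<not> roof_winning i C" "C \<subseteq> {1..4 * i}" "roof_winning i (insert (p - 1) (C - {p}))"
    and "p \<in> C" "2 \<le> p" "p - 1 \<notin> C"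
  obtains k where "prefix_card (enc_coalition i k) (p - 1) = prefix_card C (p - 1) + 1"
proof -
  have "finite C" using assms(2) finite_subset by blast
  then obtain k where "k < 2 ^ i"
    and k: "\<And>y. prefix_card (enc_coalition i k) y \<le> prefix_card C y + (if y = p - 1 then 1 else 0)"
    using roof_winning_direct_shiftE[OF assms(3) _ assms(4-6)] by blast
  have "\<not> (\<forall>y. prefix_card (enc_coalition i k) y \<le> prefix_card C y)"
    using assms(1,2) \<open>k < 2 ^ i\<close> unfolding roof_winning_iff_prefix_card by blast
  then obtain y where "prefix_card C y < prefix_card (enc_coalition i k) y"
    by (auto simp: not_le)
  with k[of y] have "prefix_card (enc_coalition i k) (p - 1) = prefix_card C (p - 1) + 1"
    by (auto split: if_splits)
  then show thesis by (rule that)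
qed

theorem lemma2:
  fixes i p a :: nat and C :: "nat set"
  assumes "i \<ge> 1"
    and "ceiling i C"
    and "\<exists>S1 S2. S1 \<noteq> S2 \<and> direct_left_shift (4 * i) C S1 \<and> direct_left_shift (4 * i) C S2"
    and "p \<in> C" and "p \<ge> 2" and "p - 1 \<notin> C"
    and "a = card {x \<in> C. x \<le> p}"
  shows "p = 2 * a"
proof -
  have C: "C \<subseteq> {1..4 * i}" and losing: "\<not> roof_winning i C"
    and shift_wins: "\<And>S'. direct_left_shift (4 * i) C S' \<Longrightarrow> roof_winning i S'"
    using assms(2) unfolding ceiling_def max_losing_def left_shift_def by auto
  have fin: "finite C" using C finite_subset by blast
  have "p \<le> 4 * i" using assms(4) C by auto
  then have "direct_left_shift (4 * i) C (insert (p - 1) (C - {p}))"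
    unfolding direct_left_shift_def using assms(4-6) by blast
  then obtain k where k: "prefix_card (enc_coalition i k) (p - 1) = prefix_card C (p - 1) + 1"
    using losing_direct_shift_excess[OF losing C shift_wins assms(4-6)] by blast
  obtain S' where S': "direct_left_shift (4 * i) C S'" "S' \<noteq> insert (p - 1) (C - {p})"
    using assms(3) by metis
  then obtain q where q: "q \<in> C" "2 \<le> q" "q - 1 \<notin> C" and S'_eq: "S' = insert (q - 1) (C - {q})"
    unfolding direct_left_shift_def by blast
  have "q \<noteq> p" using S'(2) S'_eq by blast
  have "roof_winning i (insert (q - 1) (C - {q}))" using shift_wins S'(1) S'_eq by simp
  then obtain l
    where l: "\<And>y. prefix_card (enc_coalition i l) y \<le> prefix_card C y + (if y = q - 1 then 1 else 0)"
    using roof_winning_direct_shiftE[OF _ fin q] by blast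
  have l_bound: "prefix_card (enc_coalition i l) (p - 1) \<le> prefix_card C (p - 1)"
    using l[of "p - 1"] q(2) \<open>q \<noteq> p\<close> assms(5) by (simp split: if_splits)
  have "p - 1 \<le> 4 * i" using \<open>p \<le> 4 * i\<close> by simp
  from enc_coalition_prefix_card[OF this, of k] enc_coalition_prefix_card[OF this, of l]
  have "prefix_card C (p - 1) = (p - 1) div 2" and "odd (p - 1)"
    using k l_bound by (auto split: if_splits)
  moreover have "a = prefix_card C (p - 1) + 1"
    using prefix_card_pred[OF fin, of p] assms(4,5,7) by (simp add: prefix_card_def)
  ultimately show ?thesis using assms(5) by presburger
qed

end
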